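(* Let $P=\bigcap_{j=1}^m\{\mathbf{u}\in\mathbb{R}^n:\langle\mathbf{u},\mathbf{v}_j\rangle-\lambda_j\ge0\}$ be an $n$-dimensional polytope in $\mathbb{R}^n$. If $\mathbf{u}\notin\mathrm{Trop}(P,\mathbf{m})$ for some lattice point $\mathbf{m}\in\mathbb{Z}^n$, then there exists a primitive lattice point $\widetilde{\mathbf{m}}\in\mathbb{Z}^n$ orthogonal to an $(n-1)$-dimensional subspace of $\mathbb{R}^n$ spanned by facet normal vectors $\mathbf{v}_j$ such that $\mathbf{u}\notin\mathrm{Trop}(P,\widetilde{\mathbf{m}})$.
   Context: The description of $P$ is non-redundant (each half-space bounds a distinct facet) and the inward normals $\mathbf{v}_j\in\mathbb{Z}^n$ are primitive; $\ell_j(\mathbf{u})=\langle\mathbf{u},\mathbf{v}_j\rangle-\lambda_j$. For $\mathbf{m}\in\mathbb{Z}^n$, $\mathrm{Trop}(P,\mathbf{m})$ is the non-differentiable locus of $\mathbf{u}\mapsto\min\{\ell_j(\mathbf{u}):\langle\mathbf{m},\mathbf{v}_j\rangle\neq0\}$, equivalently the set of $\mathbf{u}$ at which this minimum is attained by at least two distinct indices $j$ with $\langle\mathbf{m},\mathbf{v}_j\rangle\ne0$; $\mathrm{Trop}(P,\mathbf{0})=\mathbb{R}^n$. *)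

theory Defs
  imports "HOL-Analysis.Analysis"
begin

definition lattice_point :: "real^'n \<Rightarrow> bool" where
  "lattice_point x \<longleftrightarrow> (\<forall>i. x $ i \<in> \<int>)"

definition primitive :: "real^'n \<Rightarrow> bool" where
  "primitive x \<longleftrightarrow> lattice_point x \<and> x \<noteq> 0 \<and>
     (\<forall>w k. lattice_point w \<and> x = of_int k *\<^sub>R w \<longrightarrow> k = 1 \<or> k = -1)"

definition half_poly :: "nat \<Rightarrow> (nat \<Rightarrow> real^'n) \<Rightarrow> (nat \<Rightarrow> real) \<Rightarrow> (real^'n) set" where
  "half_poly N v lam = {u. \<forall>j<N. u \<bullet> v j - lam j \<ge> 0}"

definition Trop :: "nat \<Rightarrow> (nat \<Rightarrow> real^'n) \<Rightarrow> (nat \<Rightarrow> real) \<Rightarrow> real^'n \<Rightarrow> (real^'n) set" where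
  "Trop N v lam mm = (if mm = 0 then UNIV else
     {u. \<exists>j k. j < N \<and> k < N \<and> j \<noteq> k \<and> mm \<bullet> v j \<noteq> 0 \<and> mm \<bullet> v k \<noteq> 0 \<and>
          u \<bullet> v j - lam j = u \<bullet> v k - lam k \<and>
          (\<forall>i<N. mm \<bullet> v i \<noteq> 0 \<longrightarrow> u \<bullet> v j - lam j \<le> u \<bullet> v i - lam i)})"

end

theory Submission
  imports Defs
begin

text \<open>Let \<open>j\<^sub>0\<close> minimise \<open>\<ell>\<^sub>j(u)\<close> among the facets with \<open>\<langle>m,v\<^sub>j\<rangle> \<noteq> 0\<close>. Since \<open>u \<notin> Trop(P,m)\<close>,
every other facet \<open>j\<close> with \<open>\<ell>\<^sub>j(u) \<le> \<ell>\<^sub>j\<^sub>0(u)\<close> has \<open>\<langle>m,v\<^sub>j\<rangle> = 0\<close>, so \<open>v\<^sub>j\<^sub>0\<close> lies outside the span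
of these \<open>v\<^sub>j\<close>. As the normals of a bounded polytope span \<open>\<real>\<^sup>n\<close>, these \<open>v\<^sub>j\<close> can be completed by
further normals to a basis of a hyperplane \<open>H\<close> avoiding \<open>v\<^sub>j\<^sub>0\<close>. Cramer's rule yields an integral
normal of \<open>H\<close>; its primitive multiple \<open>m'\<close> still singles out \<open>j\<^sub>0\<close> as the unique minimiser, so
\<open>u \<notin> Trop(P,m')\<close>.\<close>

lemma Ints_det:
  fixes A :: "'a::comm_ring_1^'n^'n"
  assumes "\<And>i j. A$i$j \<in> \<int>"
  shows "det A \<in> \<int>"
  unfolding det_def using assms by (intro Ints_sum Ints_mult Ints_prod) auto

lemma primitive_scaleR_lattice_point:
  fixes w :: "real^'n"
  assumes lw: "lattice_point w" and w0: "w \<noteq> 0"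
  shows "\<exists>c>0. primitive (c *\<^sub>R w)"
proof -
  obtain i where wi: "w$i \<noteq> 0" using w0 by (auto simp: vec_eq_iff)
  define K where "K = {k::nat. 0 < k \<and> lattice_point ((1 / real k) *\<^sub>R w)}"
  have K_bound: "k \<le> nat \<lceil>\<bar>w$i\<bar>\<rceil>" if "k \<in> K" for k
  proof -
    have "w$i / real k \<in> \<int>" "w$i / real k \<noteq> 0"
      using that wi unfolding K_def lattice_point_def by auto
    then have "1 \<le> \<bar>w$i\<bar> / real k"
      using Ints_nonzero_abs_ge1 by fastforce
    with that show ?thesis unfolding K_def by (simp add: le_divide_eq) linarith
  qed
  have "finite K" using K_bound by (blast intro: finite_subset[of K "{..nat \<lceil>\<bar>w$i\<bar>\<rceil>}"])
  moreover have "1 \<in> K" using lw K_def by simp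
  ultimately obtain k0 where k0K: "k0 \<in> K" and k0_max: "\<And>k. k \<in> K \<Longrightarrow> k \<le> k0"
    using Max_in Max_ge by blast
  then have k0_pos: "k0 > 0" by (simp add: K_def)
  define mt where "mt = (1 / real k0) *\<^sub>R w"
  have "primitive mt"
    unfolding primitive_def
  proof (intro conjI allI impI)
    show "lattice_point mt" and mt0: "mt \<noteq> 0" using k0K w0 unfolding K_def mt_def by auto
    fix w' k assume w'k: "lattice_point w' \<and> mt = of_int k *\<^sub>R w'"
    with mt0 have "k \<noteq> 0" by auto
    define q where "q = k0 * nat \<bar>k\<bar>"
    \<comment> \<open>If \<open>mt = k w'\<close> then \<open>w / (k0 |k|) = \<plusminus>w'\<close> is a lattice point, so \<open>k0 |k| \<in> K\<close>.\<close>
    have "(1 / real q) *\<^sub>R w = of_int (sgn k) *\<^sub>R w'"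
      using w'k k0_pos \<open>k \<noteq> 0\<close> unfolding mt_def q_def
      by (auto simp: sgn_if vec_eq_iff field_simps)
    moreover have "lattice_point (of_int (sgn k) *\<^sub>R w')"
      using w'k unfolding lattice_point_def by simp
    moreover have "q > 0" using \<open>k \<noteq> 0\<close> k0_pos q_def by simp
    ultimately have "q \<le> k0" using k0_max K_def by simp
    then show "k = 1 \<or> k = -1" using k0_pos \<open>k \<noteq> 0\<close> q_def by simp linarith
  qed
  with k0_pos show ?thesis unfolding mt_def by (intro exI[of _ "1 / real k0"]) auto
qed

lemma span_normals_eq_UNIV:
  fixes v :: "nat \<Rightarrow> real^'n"
  assumes bounded: "bounded (half_poly N v lam)" and p: "p \<in> half_poly N v lam"
  shows "span (v ` {..<N}) = UNIV"
proof (rule ccontr)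
  assume "span (v ` {..<N}) \<noteq> UNIV"
  then obtain x where x0: "x \<noteq> 0" and x_orth: "\<forall>y \<in> span (v ` {..<N}). x \<bullet> y = 0"
    using span_not_UNIV_orthogonal by blast
  then have "x \<bullet> v j = 0" if "j < N" for j
    using that by (intro x_orth[rule_format] span_base) auto
  then have line: "p + t *\<^sub>R x \<in> half_poly N v lam" for t
    using p unfolding half_poly_def by (simp add: inner_add_left)
  obtain b where b: "\<And>y. y \<in> half_poly N v lam \<Longrightarrow> norm y \<le> b"
    using bounded unfolding bounded_iff by blast
  define t where "t = (b + norm p + 1) / norm x"
  have "norm (t *\<^sub>R x) = b + norm p + 1"
  proof -
    have "0 \<le> b + norm p + 1" using b[OF p] norm_ge_zero[of p] by linarith
    with x0 show ?thesis unfolding t_def by (simp add: abs_of_nonneg)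
  qed
  moreover have "norm (t *\<^sub>R x) \<le> norm (p + t *\<^sub>R x) + norm p"
    using norm_triangle_ineq4[of "p + t *\<^sub>R x" p] by simp
  ultimately show False using b[OF line[of t]] by linarith
qed

lemma hyperplane_basis_separating:
  fixes V :: "'a::euclidean_space set"
  assumes V: "span V = UNIV" and a: "a \<in> V" and A: "A \<subseteq> V" "a \<notin> span A"
  obtains B where "B \<subseteq> V" "A \<subseteq> span B" "a \<notin> span B" "independent (insert a B)"
    "span (insert a B) = UNIV" "dim (span B) = DIM('a) - 1"
proof -
  obtain BA where BA: "BA \<subseteq> A" "independent BA" "A \<subseteq> span BA"
    using maximal_independent_subset by blast
  have a_BA: "a \<notin> span BA" using A(2) span_mono[OF BA(1)] by blast
  then have "independent (insert a BA)" using BA(2) by (simp add: independent_insert)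
  then obtain C where C: "insert a BA \<subseteq> C" "C \<subseteq> V" "independent C" "V \<subseteq> span C"
    using maximal_independent_subset_extend[of "insert a BA" V] a A(1) BA(1) by blast
  define B where "B = C - {a}"
  have C_eq: "C = insert a B" and a_notin: "a \<notin> B" using C(1) B_def by auto
  have span_C: "span C = UNIV" using V span_mono[OF C(4)] by (simp add: span_span top_unique)
  have indep_B: "independent B" using C(3) B_def dependent_mono by blast
  have a_B: "a \<notin> span B" using C(3) a_notin unfolding C_eq by (simp add: independent_insert)
  have "a \<notin> BA" using a_BA span_base by blast
  then have "BA \<subseteq> B" using C(1) B_def by blast
  then have A_B: "A \<subseteq> span B" using BA(3) span_mono by blast
  have "card C = DIM('a)" using C(3) span_C basis_card_eq_dim[of C UNIV] by simp
  moreover have "finite C" using C(3) independent_bound by blast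
  ultimately have "dim (span B) = DIM('a) - 1"
    using indep_B a_notin unfolding C_eq by (simp add: dim_eq_card_independent)
  moreover have "B \<subseteq> V" using C(2) B_def by blast
  ultimately show thesis
    using that C(3) span_C A_B a_B unfolding C_eq by blast
qed

lemma primitive_normal_to_hyperplane:
  fixes b :: "real^'n"
  assumes indep: "independent (insert b B)" and span: "span (insert b B) = UNIV"
    and b: "b \<notin> B" and lattice: "\<And>x. x \<in> insert b B \<Longrightarrow> lattice_point x"
  obtains w where "primitive w" "\<And>x. x \<in> span B \<Longrightarrow> orthogonal w x" "w \<bullet> b \<noteq> 0"
proof -
  have fin: "finite (insert b B)" using independent_bound[OF indep] by simp
  moreover have "card (insert b B) = CARD('n)"
    using basis_card_eq_dim[of "insert b B" UNIV] indep span by simp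
  ultimately have "\<exists>h. bij_betw h (UNIV :: 'n set) (insert b B)"
    by (intro finite_same_card_bij) simp_all
  then obtain h :: "'n \<Rightarrow> real^'n" where h: "bij_betw h UNIV (insert b B)" ..
  then have "b \<in> range h" by (simp add: bij_betw_def)
  then obtain i0 where h_i0: "h i0 = b" by blast
  define M :: "real^'n^'n" where "M = (\<chi> r. h r)"
  have M_row: "(M *v x) $ r = h r \<bullet> x" for x r
    unfolding M_def by (simp add: matrix_vector_mult_def inner_vec_def)
  have "rows M = insert b B"
    using h unfolding M_def rows_def row_def bij_betw_def by auto
  then have "det M \<noteq> 0"
    using span by (simp add: invertible_det_nz[symmetric] invertible_left_inverse
        matrix_left_invertible_span_rows)
  \<comment> \<open>Cramer's rule for \<open>M x = e\<^sub>i\<^sub>0\<close> with the denominator \<open>det M\<close> cleared.\<close>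
  define w :: "real^'n" where "w = (\<chi> k. det (\<chi> i j. if j = k then axis i0 1 $ i else M$i$j))"
  have "M *v w = det M *\<^sub>R (M *v ((1 / det M) *\<^sub>R w))"
    using \<open>det M \<noteq> 0\<close> by (simp add: matrix_vector_mult_scaleR)
  also have "M *v ((1 / det M) *\<^sub>R w) = axis i0 1"
    using cramer[OF \<open>det M \<noteq> 0\<close>] unfolding w_def by (simp add: vec_eq_iff divide_inverse mult.commute)
  finally have h_w: "h r \<bullet> w = (if r = i0 then det M else 0)" for r
    using M_row[of w r] by (cases "r = i0") (simp_all add: axis_def)
  have "lattice_point w"
    unfolding lattice_point_def w_def
  proof
    fix k
    have "h i \<in> insert b B" for i using h bij_betwE by blast
    then have "M $ i $ j \<in> \<int>" for i j using lattice unfolding lattice_point_def M_def by simp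
    then show "(\<chi> k. det (\<chi> i j. if j = k then axis i0 1 $ i else M$i$j)) $ k \<in> \<int>"
      by (simp add: Ints_det axis_def)
  qed
  moreover have "w \<noteq> 0" using h_w[of i0] \<open>det M \<noteq> 0\<close> by auto
  ultimately obtain c where c: "c > 0" "primitive (c *\<^sub>R w)"
    using primitive_scaleR_lattice_point by blast
  have "orthogonal (c *\<^sub>R w) x" if x_B: "x \<in> B" for x
  proof -
    obtain r where r: "x = h r" using h x_B unfolding bij_betw_def by blast
    with b h_i0 x_B have "r \<noteq> i0" by auto
    then show ?thesis using h_w[of r] r by (simp add: orthogonal_def inner_commute[of w])
  qed
  then have "orthogonal (c *\<^sub>R w) x" if "x \<in> span B" for x
    using orthogonal_to_span that by blast
  moreover have "c *\<^sub>R w \<bullet> b \<noteq> 0"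
    using h_w[of i0] h_i0 \<open>det M \<noteq> 0\<close> \<open>c > 0\<close> by (simp add: inner_commute[of w])
  ultimately show thesis using that c(2) by blast
qed

lemma lattice_hyperplane_separating:
  fixes V :: "(real^'n) set"
  assumes V: "span V = UNIV" "\<And>x. x \<in> V \<Longrightarrow> lattice_point x"
    and a: "a \<in> V" and A: "A \<subseteq> V" "a \<notin> span A"
  obtains B w where "B \<subseteq> V" "A \<subseteq> span B" "dim (span B) = CARD('n) - 1"
    "primitive w" "\<And>x. x \<in> span B \<Longrightarrow> orthogonal w x" "w \<bullet> a \<noteq> 0"
proof -
  obtain B where B: "B \<subseteq> V" "A \<subseteq> span B" "a \<notin> span B"
      "independent (insert a B)" "span (insert a B) = UNIV" "dim (span B) = DIM(real^'n) - 1"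
    by (rule hyperplane_basis_separating[OF V(1) a A])
  have "a \<notin> B" using B(3) span_base by blast
  moreover have "lattice_point x" if "x \<in> insert a B" for x
    using that a B(1) V(2) by blast
  ultimately obtain w where "primitive w" "\<And>x. x \<in> span B \<Longrightarrow> orthogonal w x" "w \<bullet> a \<noteq> 0"
    using primitive_normal_to_hyperplane[OF B(4,5)] by blast
  with B show thesis using that by simp
qed

lemma not_in_TropE:
  assumes notin: "u \<notin> Trop N v lam m" and j: "j < N" "m \<bullet> v j \<noteq> 0"
  obtains j0 where "j0 < N" "m \<bullet> v j0 \<noteq> 0"
    "\<And>j. j < N \<Longrightarrow> j \<noteq> j0 \<Longrightarrow> u \<bullet> v j - lam j \<le> u \<bullet> v j0 - lam j0 \<Longrightarrow> m \<bullet> v j = 0"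
proof -
  define l where "l j = u \<bullet> v j - lam j" for j
  define S where "S = {j. j < N \<and> m \<bullet> v j \<noteq> 0}"
  have "finite S" "S \<noteq> {}" using j unfolding S_def by auto
  then obtain j0 where j0: "j0 \<in> S" and j0_min: "\<And>j. j \<in> S \<Longrightarrow> l j0 \<le> l j"
    using arg_min_if_finite[of S l] by (meson not_le)
  have "m \<bullet> v j = 0" if "j < N" "j \<noteq> j0" "l j \<le> l j0" for j
  proof (rule ccontr)
    assume "m \<bullet> v j \<noteq> 0"
    with that j0_min have "l j0 = l j" unfolding S_def by force
    with that j0 j0_min \<open>m \<bullet> v j \<noteq> 0\<close>
    have "\<exists>j' k. j' < N \<and> k < N \<and> j' \<noteq> k \<and> m \<bullet> v j' \<noteq> 0 \<and> m \<bullet> v k \<noteq> 0 \<and>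
        l j' = l k \<and> (\<forall>i<N. m \<bullet> v i \<noteq> 0 \<longrightarrow> l j' \<le> l i)"
      unfolding S_def by (intro exI[of _ j0] exI[of _ j]) auto
    then have "u \<in> Trop N v lam m" using \<open>m \<bullet> v j \<noteq> 0\<close> unfolding Trop_def l_def by auto
    with notin show False by contradiction
  qed
  with j0 show thesis using that unfolding S_def l_def by blast
qed

lemma not_in_TropI:
  assumes "m \<noteq> 0" "j0 < N" "m \<bullet> v j0 \<noteq> 0"
    and below: "\<And>j. j < N \<Longrightarrow> j \<noteq> j0 \<Longrightarrow> u \<bullet> v j - lam j \<le> u \<bullet> v j0 - lam j0 \<Longrightarrow> m \<bullet> v j = 0"
  shows "u \<notin> Trop N v lam m"
proof
  assume "u \<in> Trop N v lam m"
  with \<open>m \<noteq> 0\<close> obtain j k where jk: "j < N" "k < N" "j \<noteq> k" "m \<bullet> v j \<noteq> 0" "m \<bullet> v k \<noteq> 0"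
      "u \<bullet> v j - lam j = u \<bullet> v k - lam k"
    and j_min: "\<forall>i<N. m \<bullet> v i \<noteq> 0 \<longrightarrow> u \<bullet> v j - lam j \<le> u \<bullet> v i - lam i"
    unfolding Trop_def by auto
  have "j = j0" using j_min jk(1,4) assms(2,3) below by blast
  then show False using j_min jk assms(2,3) below by (metis order_refl)
qed

theorem lemma6p4:
  fixes N :: nat and v :: "nat \<Rightarrow> real^'n" and lam :: "nat \<Rightarrow> real"
    and mm :: "real^'n" and u :: "real^'n"
  assumes poly: "polytope (half_poly N v lam)"
    and full: "aff_dim (half_poly N v lam) = int CARD('n)"
    and prim: "\<forall>j<N. primitive (v j)"
    and facets: "\<forall>j<N. {x \<in> half_poly N v lam. x \<bullet> v j - lam j = 0} facet_of half_poly N v lam"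
    and nonred: "inj_on (\<lambda>j. {x \<in> half_poly N v lam. x \<bullet> v j - lam j = 0}) {..<N}"
    and mlat: "lattice_point mm"
    and notin: "u \<notin> Trop N v lam mm"
  shows "\<exists>mt J. primitive mt \<and> J \<subseteq> {..<N} \<and> dim (span (v ` J)) = CARD('n) - 1 \<and>
           (\<forall>x\<in>span (v ` J). orthogonal mt x) \<and> u \<notin> Trop N v lam mt"
proof -
  define l where "l j = u \<bullet> v j - lam j" for j
  obtain p where "p \<in> half_poly N v lam" using full aff_dim_empty by fastforce
  then have span_v: "span (v ` {..<N}) = UNIV"
    using span_normals_eq_UNIV poly polytope_imp_bounded by blast
  have "mm \<noteq> 0" using notin unfolding Trop_def by auto
  then obtain j where "j < N" "mm \<bullet> v j \<noteq> 0"
    using orthogonal_to_span[of mm "v ` {..<N}" mm] span_v by (auto simp: orthogonal_def)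
  then obtain j0 where j0: "j0 < N" "mm \<bullet> v j0 \<noteq> 0"
    and below_j0: "\<And>j. j < N \<Longrightarrow> j \<noteq> j0 \<Longrightarrow> l j \<le> l j0 \<Longrightarrow> mm \<bullet> v j = 0"
    using not_in_TropE[OF notin] unfolding l_def by blast
  define T where "T = {j. j < N \<and> j \<noteq> j0 \<and> l j \<le> l j0}"
  have lattice: "lattice_point x" if "x \<in> v ` {..<N}" for x
    using that prim unfolding primitive_def by auto
  have j0_in: "v j0 \<in> v ` {..<N}" and T_in: "v ` T \<subseteq> v ` {..<N}"
    using j0(1) unfolding T_def by auto
  have j0_T: "v j0 \<notin> span (v ` T)"
    using j0(2) below_j0 orthogonal_to_span unfolding T_def orthogonal_def by blast
  obtain B mt where B: "B \<subseteq> v ` {..<N}" "v ` T \<subseteq> span B" "dim (span B) = CARD('n) - 1"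
    and mt: "primitive mt" "\<And>x. x \<in> span B \<Longrightarrow> orthogonal mt x" "mt \<bullet> v j0 \<noteq> 0"
    using lattice_hyperplane_separating[OF span_v lattice j0_in T_in j0_T] by blast
  define J where "J = {j. j < N \<and> v j \<in> B}"
  have "J \<subseteq> {..<N}" "v ` J = B" using B(1) unfolding J_def by auto
  moreover have "u \<notin> Trop N v lam mt"
  proof (rule not_in_TropI)
    show "mt \<noteq> 0" using mt(1) unfolding primitive_def by blast
    show "mt \<bullet> v j = 0" if "j < N" "j \<noteq> j0" "u \<bullet> v j - lam j \<le> u \<bullet> v j0 - lam j0" for j
      using that B(2) mt(2) unfolding T_def l_def orthogonal_def by blast
  qed (use j0 mt(3) in auto)
  ultimately show ?thesis using mt(1,2) B(3) by (intro exI[of _ mt] exI[of _ J]) auto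
qed

end
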